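(* There is an absolute constant $C>0$ such that for every integer $d\ge1$, every $\alpha>0$, every $n\ge1$ and all points $v_1,\dots,v_n\in[0,1]^d$, if $T$ is a minimal spanning tree on $v_1,\dots,v_n$ (with respect to Euclidean distance), then \[ \sum_{e\in T}\|e\|^\alpha\le (C\sqrt d)^\alpha\, n^{\max(0,\,1-\alpha/d)}. \]
   Context: A minimal spanning tree (MST) on a finite set of points in a metric space is a spanning tree of the complete graph on those points that minimizes the sum of the edge lengths. $\|e\|$ denotes the Euclidean length of an edge $e$. *)

theory Defs
  imports Complex_Main
begin

text \<open>Points of [0,1]^d are represented as functions nat => real, of which only the
coordinates k < d are relevant. The n points are v 0, ..., v (n-1); vertices of the
complete graph are the indices {..<n}; edges are 2-element sets of indices.\<close>

definition eucl_dist :: "nat \<Rightarrow> (nat \<Rightarrow> real) \<Rightarrow> (nat \<Rightarrow> real) \<Rightarrow> real" where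
  "eucl_dist d x y = sqrt (\<Sum>k<d. (x k - y k)^2)"

definition in_unit_cube :: "nat \<Rightarrow> (nat \<Rightarrow> real) \<Rightarrow> bool" where
  "in_unit_cube d x \<longleftrightarrow> (\<forall>k<d. 0 \<le> x k \<and> x k \<le> 1)"

definition edge_len :: "nat \<Rightarrow> (nat \<Rightarrow> nat \<Rightarrow> real) \<Rightarrow> nat set \<Rightarrow> real" where
  "edge_len d v e = Max ((\<lambda>(i,j). eucl_dist d (v i) (v j)) ` (e \<times> e))"

definition complete_edges :: "nat \<Rightarrow> nat set set" where
  "complete_edges n = {{i,j} | i j. i < n \<and> j < n \<and> i \<noteq> j}"

definition graph_connected :: "nat \<Rightarrow> nat set set \<Rightarrow> bool" where
  "graph_connected n T \<longleftrightarrow>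
     (\<forall>i<n. \<forall>j<n. (i, j) \<in> {(a, b). {a, b} \<in> T}\<^sup>*)"

definition is_cycle :: "nat set set \<Rightarrow> nat list \<Rightarrow> bool" where
  "is_cycle T c \<longleftrightarrow> 3 \<le> length c \<and> distinct c \<and>
     (\<forall>i<length c. {c ! i, c ! ((i + 1) mod length c)} \<in> T)"

definition spanning_tree :: "nat \<Rightarrow> nat set set \<Rightarrow> bool" where
  "spanning_tree n T \<longleftrightarrow> T \<subseteq> complete_edges n \<and> graph_connected n T \<and>
     (\<nexists>c. is_cycle T c)"

definition tree_weight :: "nat \<Rightarrow> (nat \<Rightarrow> nat \<Rightarrow> real) \<Rightarrow> nat set set \<Rightarrow> real" where
  "tree_weight d v T = (\<Sum>e\<in>T. edge_len d v e)"

definition is_MST :: "nat \<Rightarrow> (nat \<Rightarrow> nat \<Rightarrow> real) \<Rightarrow> nat \<Rightarrow> nat set set \<Rightarrow> bool" where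
  "is_MST d v n T \<longleftrightarrow> spanning_tree n T \<and>
     (\<forall>T'. spanning_tree n T' \<longrightarrow> tree_weight d v T \<le> tree_weight d v T')"

end

theory Submission
  imports Defs "HOL-Analysis.Analysis"
begin

(*
  Deleting an edge e = {x,y} from a minimal spanning tree T splits the vertices into the side
  of x and the side of y, and every vertex z on the side of x satisfies |e| <= |v z - v y|:
  otherwise exchanging e for {z,y} would give a lighter spanning tree. So if f is another edge
  with |f| <= |e|, then (up to swapping x and y) both endpoints of f are at distance at least |e|
  from v y, and Apollonius' identity puts the midpoint of f at distance at least (sqrt 3 / 2) |e|
  from v y, whereas the midpoint of e is at distance |e| / 2 from it. Hence the cubes of
  half-side |e| / (6 sqrt d) about the midpoints of the edges are pairwise disjoint. They lie in
  a cube of side 2, so comparing volumes gives sum |e|^d <= (6 sqrt d)^d. For alpha >= d this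
  bounds sum |e|^alpha directly; for alpha < d the power-mean inequality over the at most n
  edges of positive length contributes the factor n^(1 - alpha/d).
*)

section \<open>Connectivity of edge sets\<close>

definition edge_rel :: "nat set set \<Rightarrow> (nat \<times> nat) set" where
  "edge_rel T = {(a, b). {a, b} \<in> T}"

lemma edge_rel_iff [simp]: "(a, b) \<in> edge_rel T \<longleftrightarrow> {a, b} \<in> T"
  by (simp add: edge_rel_def)

lemma graph_connected_iff: "graph_connected n T \<longleftrightarrow> (\<forall>i<n. \<forall>j<n. (i, j) \<in> (edge_rel T)\<^sup>*)"
  by (simp add: graph_connected_def edge_rel_def)

lemma rtrancl_edge_rel_sym: "(a, b) \<in> (edge_rel T)\<^sup>* \<Longrightarrow> (b, a) \<in> (edge_rel T)\<^sup>*"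
proof -
  have "sym (edge_rel T)"
    by (auto simp: sym_def insert_commute)
  then have "sym ((edge_rel T)\<^sup>*)"
    by (rule sym_rtrancl)
  then show "(a, b) \<in> (edge_rel T)\<^sup>* \<Longrightarrow> (b, a) \<in> (edge_rel T)\<^sup>*"
    by (rule symD)
qed

lemma rtrancl_edge_rel_mono: "T \<subseteq> T' \<Longrightarrow> (edge_rel T)\<^sup>* \<subseteq> (edge_rel T')\<^sup>*"
  by (rule rtrancl_mono) auto

lemma rtrancl_edge_rel_Diff_edge:
  fixes a b :: nat
  assumes "(u, w) \<in> (edge_rel H)\<^sup>*"
  defines "R \<equiv> edge_rel (H - {{a, b}})"
  shows "(u, w) \<in> R\<^sup>* \<or> ((u, a) \<in> R\<^sup>* \<and> (b, w) \<in> R\<^sup>*) \<or> ((u, b) \<in> R\<^sup>* \<and> (a, w) \<in> R\<^sup>*)"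
  using assms(1)
proof (induction rule: rtrancl_induct)
  case base
  then show ?case by simp
next
  case (step w w')
  show ?case
  proof (cases "{w, w'} = {a, b}")
    case False
    then have "(w, w') \<in> R"
      using step(2) by (simp add: R_def)
    with step(3) show ?thesis
      by (meson rtrancl_into_rtrancl)
  next
    case True
    then have "(w = a \<and> w' = b) \<or> (w = b \<and> w' = a)"
      by (auto simp: doubleton_eq_iff)
    with step(3) show ?thesis by auto
  qed
qed

lemma rtrancl_edge_rel_Diff_edge_sides:
  assumes "(a, w) \<in> (edge_rel H)\<^sup>*"
  shows "(a, w) \<in> (edge_rel (H - {{a, b}}))\<^sup>* \<or> (b, w) \<in> (edge_rel (H - {{a, b}}))\<^sup>*"
  using rtrancl_edge_rel_Diff_edge[OF assms, of a b] by (meson rtrancl_trans)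

lemma graph_connected_exchange:
  assumes conn: "graph_connected n T" and sub: "T - {{x, y}} \<subseteq> H"
    and xy: "(x, y) \<in> (edge_rel H)\<^sup>*"
  shows "graph_connected n H"
  unfolding graph_connected_iff
proof (intro allI impI)
  fix i j assume "i < n" "j < n"
  then have "(i, j) \<in> (edge_rel T)\<^sup>*"
    using conn by (simp add: graph_connected_iff)
  moreover have "(edge_rel (T - {{x, y}}))\<^sup>* \<subseteq> (edge_rel H)\<^sup>*"
    using sub by (rule rtrancl_edge_rel_mono)
  moreover have "(y, x) \<in> (edge_rel H)\<^sup>*"
    using xy by (rule rtrancl_edge_rel_sym)
  ultimately show "(i, j) \<in> (edge_rel H)\<^sup>*"
    using rtrancl_edge_rel_Diff_edge[of i j T x y] xy by (meson rtrancl_trans subsetD)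
qed

lemma is_cycle_rtrancl_Diff_first_edge:
  assumes "is_cycle G c"
  shows "(c ! 0, c ! 1) \<in> (edge_rel (G - {{c ! 0, c ! 1}}))\<^sup>*"
proof -
  define L where "L = length c"
  let ?R = "edge_rel (G - {{c ! 0, c ! 1}})"
  have L: "3 \<le> L" and "distinct c"
    and edge: "\<And>i. i < L \<Longrightarrow> {c ! i, c ! ((i + 1) mod L)} \<in> G"
    using assms by (auto simp: is_cycle_def L_def)
  then have index_eq: "c ! i = c ! j \<longleftrightarrow> i = j" if "i < L" "j < L" for i j
    using that by (simp add: L_def nth_eq_iff_index_eq)
  have step: "(c ! i, c ! ((i + 1) mod L)) \<in> ?R" if "1 \<le> i" "i < L" for i
  proof -
    have "{c ! i, c ! ((i + 1) mod L)} \<noteq> {c ! 0, c ! 1}"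
    proof
      assume "{c ! i, c ! ((i + 1) mod L)} = {c ! 0, c ! 1}"
      then have "c ! i = c ! 1" and "c ! ((i + 1) mod L) = c ! 0"
        using index_eq[of i 0] that L by (auto simp: doubleton_eq_iff)
      then have "i = 1" and "(i + 1) mod L = 0"
        using index_eq that L by auto
      then show False
        using L by simp
    qed
    then show ?thesis
      using edge[OF that(2)] by simp
  qed
  have path: "(c ! 1, c ! j) \<in> ?R\<^sup>*" if "1 \<le> j" "j < L" for j
    using that
  proof (induction j)
    case 0
    then show ?case by simp
  next
    case (Suc j)
    show ?case
    proof (cases "j = 0")
      case True
      then show ?thesis by simp
    next
      case False
      then have "(c ! 1, c ! j) \<in> ?R\<^sup>*"
        using Suc by simp
      moreover have "(c ! j, c ! Suc j) \<in> ?R"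
        using step[of j] False Suc.prems by simp
      ultimately show ?thesis
        by (rule rtrancl_into_rtrancl)
    qed
  qed
  have "(c ! 1, c ! (L - 1)) \<in> ?R\<^sup>*"
    using path L by simp
  moreover have "(c ! (L - 1), c ! 0) \<in> ?R"
    using step[of "L - 1"] L by simp
  ultimately have "(c ! 1, c ! 0) \<in> ?R\<^sup>*"
    by (rule rtrancl_into_rtrancl)
  then show ?thesis
    by (rule rtrancl_edge_rel_sym)
qed

lemma is_cycle_first_edge: "is_cycle G c \<Longrightarrow> {c ! 0, c ! 1} \<in> G"
proof -
  assume "is_cycle G c"
  then have L: "3 \<le> length c" and "\<forall>i<length c. {c ! i, c ! ((i + 1) mod length c)} \<in> G"
    unfolding is_cycle_def by blast+
  moreover have "0 < length c" "(0 + 1) mod length c = 1"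
    using L by auto
  ultimately show ?thesis
    by metis
qed

lemma finite_complete_edges: "finite (complete_edges n)"
proof -
  have "complete_edges n \<subseteq> Pow {..<n}"
    by (auto simp: complete_edges_def)
  then show ?thesis
    by (rule finite_subset) simp
qed

lemma complete_edgesE:
  assumes "e \<in> complete_edges n"
  obtains i j where "e = {i, j}" "i < n" "j < n" "i \<noteq> j"
  using assms by (auto simp: complete_edges_def)

lemma complete_edges_pairD:
  assumes "{x, y} \<in> complete_edges n"
  shows "x < n" "y < n" "x \<noteq> y"
  using assms by (auto simp: complete_edges_def doubleton_eq_iff)

lemma spanning_tree_subset_exists:
  assumes "G \<subseteq> complete_edges n" "graph_connected n G"
  shows "\<exists>T \<subseteq> G. spanning_tree n T"
  using assms
proof (induction "card G" arbitrary: G rule: less_induct)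
  case less
  show ?case
  proof (cases "\<exists>c. is_cycle G c")
    case False
    then show ?thesis
      using less.prems by (auto simp: spanning_tree_def)
  next
    case True
    then obtain c where cyc: "is_cycle G c" ..
    define G' where "G' = G - {{c ! 0, c ! 1}}"
    have "finite G"
      using less.prems(1) finite_complete_edges by (rule finite_subset)
    moreover have "{c ! 0, c ! 1} \<in> G"
      using cyc by (rule is_cycle_first_edge)
    ultimately have "card G' < card G"
      unfolding G'_def by (rule card_Diff1_less)
    moreover have "G' \<subseteq> complete_edges n"
      using less.prems(1) by (auto simp: G'_def)
    moreover have "graph_connected n G'"
      using graph_connected_exchange[OF less.prems(2) _ is_cycle_rtrancl_Diff_first_edge[OF cyc]]
      by (simp add: G'_def)
    ultimately obtain T where "T \<subseteq> G'" "spanning_tree n T"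
      using less.hyps by blast
    then show ?thesis
      unfolding G'_def by blast
  qed
qed

lemma far_endpoint_unique:
  assumes "e \<in> T" and e: "e = {p, c}"
    and p: "(r, p) \<in> (edge_rel (T - {e}))\<^sup>*" and c_e: "(r, c) \<notin> (edge_rel (T - {e}))\<^sup>*"
    and "f \<in> T" and f: "f = {q, c}"
    and q: "(r, q) \<in> (edge_rel (T - {f}))\<^sup>*" and c_f: "(r, c) \<notin> (edge_rel (T - {f}))\<^sup>*"
  shows "e = f"
proof (rule ccontr)
  assume "e \<noteq> f"
  then have "(q, c) \<in> edge_rel (T - {e})" and "(p, c) \<in> edge_rel (T - {f})"
    using \<open>e \<in> T\<close> \<open>f \<in> T\<close> e f by auto
  then have q_e: "(r, q) \<notin> (edge_rel (T - {e}))\<^sup>*" and p_f: "(r, p) \<notin> (edge_rel (T - {f}))\<^sup>*"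
    using c_e c_f by (meson rtrancl_into_rtrancl)+
  have "T - {e} - {{q, c}} \<subseteq> T - {e}" "T - {e} - {{q, c}} \<subseteq> T - {f}"
    using f by auto
  then show False
    using rtrancl_edge_rel_Diff_edge[OF p, of q c] c_e q_e p_f
    by (meson rtrancl_edge_rel_mono subsetD)
qed

section \<open>Euclidean distance and cubes\<close>

lemma eucl_dist_commute: "eucl_dist d x y = eucl_dist d y x"
  unfolding eucl_dist_def by (simp add: power2_commute)

lemma eucl_dist_self [simp]: "eucl_dist d x x = 0"
  unfolding eucl_dist_def by simp

lemma eucl_dist_nonneg: "0 \<le> eucl_dist d x y"
  unfolding eucl_dist_def by (simp add: sum_nonneg)

lemma eucl_dist_triangle: "eucl_dist d x z \<le> eucl_dist d x y + eucl_dist d y z"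
proof -
  have "eucl_dist d x z = L2_set (\<lambda>k. (x k - y k) + (y k - z k)) {..<d}"
    by (simp add: eucl_dist_def L2_set_def)
  also have "\<dots> \<le> eucl_dist d x y + eucl_dist d y z"
    unfolding eucl_dist_def L2_set_def[symmetric] by (rule L2_set_triangle_ineq)
  finally show ?thesis .
qed

lemma power2_eucl_dist: "(eucl_dist d x y)\<^sup>2 = (\<Sum>k<d. (x k - y k)\<^sup>2)"
  unfolding eucl_dist_def by (simp add: sum_nonneg)

lemma edge_len_pair: "edge_len d v {i, j} = eucl_dist d (v i) (v j)"
  unfolding edge_len_def
proof (rule Max_eqI)
  show "eucl_dist d (v i) (v j) \<in> (\<lambda>(i, j). eucl_dist d (v i) (v j)) ` ({i, j} \<times> {i, j})"
    by (rule image_eqI[of _ _ "(i, j)"]) auto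
  fix y assume "y \<in> (\<lambda>(i, j). eucl_dist d (v i) (v j)) ` ({i, j} \<times> {i, j})"
  then show "y \<le> eucl_dist d (v i) (v j)"
    by (auto simp: eucl_dist_nonneg eucl_dist_commute)
qed simp

lemma edge_len_nonneg: "e \<in> complete_edges n \<Longrightarrow> 0 \<le> edge_len d v e"
  by (auto elim!: complete_edgesE simp: edge_len_pair eucl_dist_nonneg)

lemma eucl_dist_le_of_coord_le:
  assumes "\<And>k. k < d \<Longrightarrow> \<bar>p k - q k\<bar> \<le> r"
  shows "eucl_dist d p q \<le> r * sqrt d"
proof (cases "d = 0")
  case True
  then show ?thesis by (simp add: eucl_dist_def)
next
  case False
  then have "0 \<le> r"
    using assms[of 0] by force
  have "(\<Sum>k<d. (p k - q k)\<^sup>2) \<le> (\<Sum>k<d. r\<^sup>2)"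
  proof (rule sum_mono)
    fix k assume "k \<in> {..<d}"
    then show "(p k - q k)\<^sup>2 \<le> r\<^sup>2"
      using assms by (metis abs_ge_zero lessThan_iff power2_abs power_mono)
  qed
  then have "eucl_dist d p q \<le> sqrt (d * r\<^sup>2)"
    unfolding eucl_dist_def by simp
  also have "\<dots> = r * sqrt d"
    using \<open>0 \<le> r\<close> by (simp add: real_sqrt_mult)
  finally show ?thesis .
qed

lemma edge_len_le_sqrt_dim:
  assumes "\<forall>i<n. in_unit_cube d (v i)" "e \<in> complete_edges n"
  shows "edge_len d v e \<le> sqrt d"
proof -
  obtain x y where e: "e = {x, y}" "x < n" "y < n"
    using assms(2) by (auto elim: complete_edgesE)
  have "\<bar>v x k - v y k\<bar> \<le> 1" if "k < d" for k
  proof -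
    have "0 \<le> v x k" "v x k \<le> 1" "0 \<le> v y k" "v y k \<le> 1"
      using assms(1) e that by (auto simp: in_unit_cube_def)
    then show ?thesis
      by (simp add: abs_le_iff)
  qed
  then have "eucl_dist d (v x) (v y) \<le> 1 * sqrt d"
    by (rule eucl_dist_le_of_coord_le)
  then show ?thesis
    by (simp add: e edge_len_pair)
qed

definition cube :: "nat \<Rightarrow> (nat \<Rightarrow> real) \<Rightarrow> real \<Rightarrow> (nat \<Rightarrow> real) set" where
  "cube d c r = PiE {..<d} (\<lambda>k. {c k - r..c k + r})"

lemma mem_cube_iff: "p \<in> cube d c r \<longleftrightarrow> p \<in> extensional {..<d} \<and> (\<forall>k<d. \<bar>p k - c k\<bar> \<le> r)"
proof -
  have "p k \<in> {c k - r..c k + r} \<longleftrightarrow> \<bar>p k - c k\<bar> \<le> r" for k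
    by (auto simp: abs_le_iff)
  then show ?thesis
    by (auto simp: cube_def PiE_iff)
qed

lemma cube_subset_cube:
  assumes "\<And>k. k < d \<Longrightarrow> \<bar>c k - c' k\<bar> + r \<le> R"
  shows "cube d c r \<subseteq> cube d c' R"
  using assms by (fastforce simp: mem_cube_iff abs_le_iff)

lemma cube_mono: "r \<le> R \<Longrightarrow> cube d c r \<subseteq> cube d c R"
  by (rule cube_subset_cube) simp

lemma cube_sets: "cube d c r \<in> sets (PiM {..<d} (\<lambda>_. lborel))"
  unfolding cube_def by (rule sets_PiM_I_finite) auto

lemma emeasure_cube:
  assumes "0 \<le> r"
  shows "emeasure (PiM {..<d} (\<lambda>_. lborel)) (cube d c r) = ennreal ((2 * r) ^ d)"
proof -
  interpret product_sigma_finite "\<lambda>_. lborel"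
    by standard
  have "emeasure (PiM {..<d} (\<lambda>_. lborel)) (cube d c r) =
      (\<Prod>k<d. emeasure lborel {c k - r..c k + r})"
    unfolding cube_def by (rule emeasure_PiM) auto
  also have "\<dots> = (\<Prod>k<d. ennreal (2 * r))"
    using assms by simp
  also have "\<dots> = ennreal ((2 * r) ^ d)"
    using assms by (simp add: ennreal_power)
  finally show ?thesis .
qed

lemma sum_cube_volumes_le:
  fixes c :: "'i \<Rightarrow> nat \<Rightarrow> real"
  assumes "finite I" and r: "\<And>i. i \<in> I \<Longrightarrow> 0 \<le> r i" and "0 \<le> R"
    and disj: "disjoint_family_on (\<lambda>i. cube d (c i) (r i)) I"
    and sub: "\<And>i. i \<in> I \<Longrightarrow> cube d (c i) (r i) \<subseteq> cube d b R"
  shows "(\<Sum>i\<in>I. (2 * r i) ^ d) \<le> (2 * R) ^ d"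
proof -
  let ?M = "PiM {..<d} (\<lambda>_. lborel :: real measure)"
  have "ennreal (\<Sum>i\<in>I. (2 * r i) ^ d) = (\<Sum>i\<in>I. ennreal ((2 * r i) ^ d))"
    by (rule sum_ennreal[symmetric]) (use r in auto)
  also have "\<dots> = (\<Sum>i\<in>I. emeasure ?M (cube d (c i) (r i)))"
    using r by (intro sum.cong) (simp_all add: emeasure_cube)
  also have "\<dots> = emeasure ?M (\<Union>i\<in>I. cube d (c i) (r i))"
    using disj \<open>finite I\<close> by (intro sum_emeasure) (auto simp: cube_sets)
  also have "\<dots> \<le> emeasure ?M (cube d b R)"
    using sub by (intro emeasure_mono) (auto simp: cube_sets)
  also have "\<dots> = ennreal ((2 * R) ^ d)"
    using \<open>0 \<le> R\<close> by (rule emeasure_cube)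
  finally show ?thesis
    using \<open>0 \<le> R\<close> by simp
qed

definition midpt :: "(nat \<Rightarrow> real) \<Rightarrow> (nat \<Rightarrow> real) \<Rightarrow> nat \<Rightarrow> real" where
  "midpt x y = (\<lambda>k. (x k + y k) / 2)"

lemma in_unit_cube_midpt:
  assumes "in_unit_cube d x" "in_unit_cube d y"
  shows "in_unit_cube d (midpt x y)"
  unfolding in_unit_cube_def midpt_def
proof (intro allI impI)
  fix k assume "k < d"
  then have "0 \<le> x k" "x k \<le> 1" "0 \<le> y k" "y k \<le> 1"
    using assms by (auto simp: in_unit_cube_def)
  then show "0 \<le> (x k + y k) / 2 \<and> (x k + y k) / 2 \<le> 1"
    by simp
qed

lemma eucl_dist_midpt: "eucl_dist d (midpt x y) y = eucl_dist d x y / 2"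
proof -
  have "(\<Sum>k<d. (midpt x y k - y k)\<^sup>2) = (\<Sum>k<d. (x k - y k)\<^sup>2) / 4"
    by (simp add: midpt_def sum_divide_distrib power2_eq_square field_simps)
  then have "eucl_dist d (midpt x y) y = sqrt ((\<Sum>k<d. (x k - y k)\<^sup>2) / 4)"
    unfolding eucl_dist_def by simp
  also have "\<dots> = eucl_dist d x y / 2"
    by (simp add: eucl_dist_def real_sqrt_divide)
  finally show ?thesis .
qed

lemma power2_eucl_dist_midpt:
  "(eucl_dist d (midpt a b) y)\<^sup>2 =
     ((eucl_dist d a y)\<^sup>2 + (eucl_dist d b y)\<^sup>2) / 2 - (eucl_dist d a b)\<^sup>2 / 4"
proof -
  have "(\<Sum>k<d. (midpt a b k - y k)\<^sup>2) =
      (\<Sum>k<d. (a k - y k)\<^sup>2 / 2 + (b k - y k)\<^sup>2 / 2 - (a k - b k)\<^sup>2 / 4)"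
    by (rule sum.cong) (simp_all add: midpt_def power2_eq_square field_simps)
  also have "\<dots> = (\<Sum>k<d. (a k - y k)\<^sup>2) / 2 + (\<Sum>k<d. (b k - y k)\<^sup>2) / 2
      - (\<Sum>k<d. (a k - b k)\<^sup>2) / 4"
    by (simp only: sum_subtractf sum.distrib sum_divide_distrib[symmetric])
  finally show ?thesis
    unfolding power2_eucl_dist by simp
qed

lemma power2_eucl_dist_midpt_ge:
  assumes "0 \<le> D" "D \<le> eucl_dist d a y" "D \<le> eucl_dist d b y" "eucl_dist d a b \<le> D"
  shows "3 * D\<^sup>2 / 4 \<le> (eucl_dist d (midpt a b) y)\<^sup>2"
proof -
  have "D\<^sup>2 \<le> (eucl_dist d a y)\<^sup>2" "D\<^sup>2 \<le> (eucl_dist d b y)\<^sup>2" "(eucl_dist d a b)\<^sup>2 \<le> D\<^sup>2"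
    using assms eucl_dist_nonneg by (auto intro!: power_mono)
  then show ?thesis
    unfolding power2_eucl_dist_midpt by (simp add: field_simps)
qed

text \<open>The cubes have circumradius D/6, so meeting cubes would bring the midpoint of a b within
  D/6 + D/6 + D/2 = 5D/6 of y; but (5/6)^2 < 3/4.\<close>

lemma midpt_cubes_disjoint:
  fixes d :: nat and x y a b :: "nat \<Rightarrow> real"
  defines "D \<equiv> eucl_dist d x y"
  assumes "0 < D" and "D \<le> eucl_dist d a y" and "D \<le> eucl_dist d b y" and "eucl_dist d a b \<le> D"
  shows "cube d (midpt x y) (D / (6 * sqrt d)) \<inter> cube d (midpt a b) (D / (6 * sqrt d)) = {}"
proof (rule ccontr)
  assume "cube d (midpt x y) (D / (6 * sqrt d)) \<inter> cube d (midpt a b) (D / (6 * sqrt d)) \<noteq> {}"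
  then obtain p where p: "p \<in> cube d (midpt x y) (D / (6 * sqrt d))" "p \<in> cube d (midpt a b) (D / (6 * sqrt d))"
    by blast
  have "d \<noteq> 0"
  proof
    assume "d = 0"
    then have "D = 0"
      by (simp add: D_def eucl_dist_def)
    with \<open>0 < D\<close> show False by simp
  qed
  then have radius: "D / (6 * sqrt d) * sqrt d = D / 6"
    by simp
  have "eucl_dist d p (midpt x y) \<le> D / 6" "eucl_dist d p (midpt a b) \<le> D / 6"
    using p eucl_dist_le_of_coord_le[of d p _ "D / (6 * sqrt d)"] unfolding radius mem_cube_iff by auto
  moreover have "eucl_dist d (midpt x y) y = D / 2"
    by (simp add: D_def eucl_dist_midpt)
  moreover have "eucl_dist d (midpt a b) y \<le> eucl_dist d (midpt a b) p + eucl_dist d p y"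
    and "eucl_dist d p y \<le> eucl_dist d p (midpt x y) + eucl_dist d (midpt x y) y"
    by (rule eucl_dist_triangle)+
  ultimately have "eucl_dist d (midpt a b) y \<le> 5 * D / 6"
    using eucl_dist_commute[of d "midpt a b" p] by linarith
  then have "(eucl_dist d (midpt a b) y)\<^sup>2 \<le> (5 * D / 6)\<^sup>2"
    by (intro power_mono) (simp_all add: eucl_dist_nonneg)
  also have "\<dots> = 25 * D\<^sup>2 / 36"
    by (simp add: power_divide power_mult_distrib)
  finally have upper: "(eucl_dist d (midpt a b) y)\<^sup>2 \<le> 25 * D\<^sup>2 / 36" .
  have "3 * D\<^sup>2 / 4 \<le> (eucl_dist d (midpt a b) y)\<^sup>2"
    using assms by (intro power2_eucl_dist_midpt_ge) simp_all
  with upper have "3 * D\<^sup>2 / 4 \<le> 25 * D\<^sup>2 / 36"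
    by linarith
  moreover have "0 < D\<^sup>2"
    using \<open>0 < D\<close> by simp
  ultimately show False
    by linarith
qed

definition edge_midpoint :: "(nat \<Rightarrow> nat \<Rightarrow> real) \<Rightarrow> nat set \<Rightarrow> nat \<Rightarrow> real" where
  "edge_midpoint v e = (\<lambda>k. (\<Sum>i\<in>e. v i k) / 2)"

lemma edge_midpoint_pair: "x \<noteq> y \<Longrightarrow> edge_midpoint v {x, y} = midpt (v x) (v y)"
  by (simp add: edge_midpoint_def midpt_def)

section \<open>Minimal spanning trees\<close>

locale euclidean_MST =
  fixes d :: nat and v :: "nat \<Rightarrow> nat \<Rightarrow> real" and n :: nat and T :: "nat set set"
  assumes MST: "is_MST d v n T"
begin

lemma edges_complete: "T \<subseteq> complete_edges n"
  and connected: "graph_connected n T"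
  and weight_minimal: "spanning_tree n T' \<Longrightarrow> tree_weight d v T \<le> tree_weight d v T'"
  using MST by (auto simp: is_MST_def spanning_tree_def)

lemma finite_edges: "finite T"
  using edges_complete finite_complete_edges by (rule finite_subset)

lemma edge_len_le_exchange:
  assumes e: "{x, y} \<in> T" and z: "z < n" and xz: "(x, z) \<in> (edge_rel (T - {{x, y}}))\<^sup>*"
  shows "edge_len d v {x, y} \<le> eucl_dist d (v z) (v y)"
proof -
  define G where "G = insert {z, y} (T - {{x, y}})"
  \<comment> \<open>intersecting with complete_edges drops the loop {y} in case z = y\<close>
  define H where "H = G \<inter> complete_edges n"
  have y: "y < n"
    using e edges_complete complete_edges_pairD by blast
  have "finite G"
    using finite_edges by (simp add: G_def)
  have G_nonneg: "0 \<le> edge_len d v f" if "f \<in> G" for f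
    using that edges_complete edge_len_nonneg by (auto simp: G_def edge_len_pair eucl_dist_nonneg)
  have "T - {{x, y}} \<subseteq> H"
    using edges_complete by (auto simp: G_def H_def)
  moreover have "(x, y) \<in> (edge_rel H)\<^sup>*"
  proof -
    have "(x, z) \<in> (edge_rel H)\<^sup>*"
      using xz rtrancl_edge_rel_mono[OF \<open>T - {{x, y}} \<subseteq> H\<close>] by blast
    moreover have "(z, y) \<in> (edge_rel H)\<^sup>*"
    proof (cases "z = y")
      case False
      then have "{z, y} \<in> complete_edges n"
        using z y unfolding complete_edges_def by blast
      then show ?thesis
        by (auto simp: G_def H_def)
    qed simp
    ultimately show ?thesis by (rule rtrancl_trans)
  qed
  ultimately have "graph_connected n H"
    by (rule graph_connected_exchange[OF connected])
  then obtain T' where T': "T' \<subseteq> H" "spanning_tree n T'"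
    using spanning_tree_subset_exists[of H n] by (auto simp: H_def)
  have "tree_weight d v T \<le> tree_weight d v T'"
    using T'(2) by (rule weight_minimal)
  also have "\<dots> \<le> tree_weight d v G"
    unfolding tree_weight_def
    using T'(1) \<open>finite G\<close> G_nonneg by (intro sum_mono2) (auto simp: H_def)
  also have "\<dots> \<le> tree_weight d v (T - {{x, y}}) + edge_len d v {z, y}"
    unfolding tree_weight_def G_def using finite_edges
    by (simp add: sum.insert_if edge_len_pair eucl_dist_nonneg)
  also have "\<dots> = tree_weight d v T - edge_len d v {x, y} + eucl_dist d (v z) (v y)"
    unfolding tree_weight_def using finite_edges e by (simp add: sum_diff1 edge_len_pair)
  finally show ?thesis by simp
qed

text \<open>Positive-length edges are bridges. This follows from minimality alone, which spares us
  turning a path in T - {x,y} into a cycle of T.\<close>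

lemma positive_edge_separates:
  assumes "{x, y} \<in> T" "0 < edge_len d v {x, y}"
  shows "(x, y) \<notin> (edge_rel (T - {{x, y}}))\<^sup>*"
proof
  assume "(x, y) \<in> (edge_rel (T - {{x, y}}))\<^sup>*"
  moreover have "y < n"
    using assms(1) edges_complete complete_edges_pairD by blast
  ultimately have "edge_len d v {x, y} \<le> 0"
    using edge_len_le_exchange[OF assms(1)] by fastforce
  with assms(2) show False
    by simp
qed

lemma positive_edge_far_endpoint:
  assumes "e \<in> T" "0 < edge_len d v e" "r < n"
  obtains p c where "e = {p, c}" "c < n"
    "(r, p) \<in> (edge_rel (T - {e}))\<^sup>*" "(r, c) \<notin> (edge_rel (T - {e}))\<^sup>*"
proof -
  obtain x y where e: "e = {x, y}" "x < n" "y < n"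
    using assms(1) edges_complete by (meson complete_edgesE subsetD)
  have sep: "(x, y) \<notin> (edge_rel (T - {e}))\<^sup>*"
    using positive_edge_separates assms(1,2) e(1) by blast
  have "(x, r) \<in> (edge_rel T)\<^sup>*"
    using connected e(2) assms(3) by (simp add: graph_connected_iff)
  then have "(x, r) \<in> (edge_rel (T - {e}))\<^sup>* \<or> (y, r) \<in> (edge_rel (T - {e}))\<^sup>*"
    using rtrancl_edge_rel_Diff_edge_sides e(1) by blast
  then show ?thesis
  proof
    assume xr: "(x, r) \<in> (edge_rel (T - {e}))\<^sup>*"
    then have "(r, x) \<in> (edge_rel (T - {e}))\<^sup>*"
      by (rule rtrancl_edge_rel_sym)
    moreover have "(r, y) \<notin> (edge_rel (T - {e}))\<^sup>*"
      using sep rtrancl_trans[OF xr] by blast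
    ultimately show ?thesis
      using that[of x y] e by blast
  next
    assume yr: "(y, r) \<in> (edge_rel (T - {e}))\<^sup>*"
    then have "(r, y) \<in> (edge_rel (T - {e}))\<^sup>*"
      by (rule rtrancl_edge_rel_sym)
    moreover have "(r, x) \<notin> (edge_rel (T - {e}))\<^sup>*"
      using sep rtrancl_trans[OF yr] rtrancl_edge_rel_sym by blast
    moreover have "e = {y, x}"
      using e(1) by (simp add: insert_commute)
    ultimately show ?thesis
      using that[of y x] e by blast
  qed
qed

text \<open>Only edges of positive length are known to be bridges, hence the restriction; edges of
  length 0 do not contribute to the sums anyway.\<close>

lemma card_positive_edges_le:
  assumes "0 < n"
  shows "card {e \<in> T. 0 < edge_len d v e} \<le> n"
proof -
  define P where "P = {e \<in> T. 0 < edge_len d v e}"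
  define far where "far e c \<longleftrightarrow> c < n \<and> (\<exists>p. e = {p, c} \<and>
    (0, p) \<in> (edge_rel (T - {e}))\<^sup>* \<and> (0, c) \<notin> (edge_rel (T - {e}))\<^sup>*)" for e c
  have "\<exists>c. far e c" if "e \<in> P" for e
  proof -
    have "e \<in> T" "0 < edge_len d v e"
      using that by (auto simp: P_def)
    then obtain p c where "e = {p, c}" "c < n"
      "(0, p) \<in> (edge_rel (T - {e}))\<^sup>*" "(0, c) \<notin> (edge_rel (T - {e}))\<^sup>*"
      by (rule positive_edge_far_endpoint[OF _ _ assms])
    then show ?thesis
      unfolding far_def by blast
  qed
  then obtain far_end where far_end: "\<And>e. e \<in> P \<Longrightarrow> far e (far_end e)"
    by metis
  have "inj_on far_end P"
  proof
    fix e f assume "e \<in> P" "f \<in> P" and eq: "far_end e = far_end f"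
    have "e \<in> T"
      using \<open>e \<in> P\<close> by (simp add: P_def)
    moreover obtain p where "e = {p, far_end e}" "(0, p) \<in> (edge_rel (T - {e}))\<^sup>*"
        "(0, far_end e) \<notin> (edge_rel (T - {e}))\<^sup>*"
      using far_end[OF \<open>e \<in> P\<close>] unfolding far_def by blast
    moreover have "f \<in> T"
      using \<open>f \<in> P\<close> by (simp add: P_def)
    moreover obtain q where "f = {q, far_end e}" "(0, q) \<in> (edge_rel (T - {f}))\<^sup>*"
        "(0, far_end e) \<notin> (edge_rel (T - {f}))\<^sup>*"
      using far_end[OF \<open>f \<in> P\<close>] unfolding eq far_def by blast
    ultimately show "e = f"
      by (rule far_endpoint_unique)
  qed
  moreover have "far_end ` P \<subseteq> {..<n}"
    using far_end by (auto simp: far_def)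
  ultimately show ?thesis
    using card_inj_on_le[of far_end P "{..<n}"] by (simp add: P_def)
qed


text \<open>The half-side is chosen so that the cube has circumradius |e|/6.\<close>

definition edge_cube :: "nat set \<Rightarrow> (nat \<Rightarrow> real) set" where
  "edge_cube e = cube d (edge_midpoint v e) (edge_len d v e / (6 * sqrt d))"

lemma edge_cubes_disjoint_same_side:
  assumes e: "{x, y} \<in> T" and pos: "0 < edge_len d v {x, y}"
    and f: "{a, b} \<in> T" "{a, b} \<noteq> {x, y}" and le: "edge_len d v {a, b} \<le> edge_len d v {x, y}"
    and xa: "(x, a) \<in> (edge_rel (T - {{x, y}}))\<^sup>*"
  shows "edge_cube {x, y} \<inter> edge_cube {a, b} = {}"
proof -
  define D where "D = eucl_dist d (v x) (v y)"
  have "x \<noteq> y" "a \<noteq> b" "a < n" "b < n"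
    using e f edges_complete complete_edges_pairD by blast+
  have "(a, b) \<in> edge_rel (T - {{x, y}})"
    using f by simp
  with xa have xb: "(x, b) \<in> (edge_rel (T - {{x, y}}))\<^sup>*"
    by (rule rtrancl_into_rtrancl)
  have "0 < D"
    using pos by (simp add: D_def edge_len_pair)
  moreover have "D \<le> eucl_dist d (v a) (v y)"
    using edge_len_le_exchange[OF e \<open>a < n\<close> xa] by (simp add: D_def edge_len_pair)
  moreover have "D \<le> eucl_dist d (v b) (v y)"
    using edge_len_le_exchange[OF e \<open>b < n\<close> xb] by (simp add: D_def edge_len_pair)
  moreover have "eucl_dist d (v a) (v b) \<le> D"
    using le by (simp add: D_def edge_len_pair)
  ultimately have "cube d (midpt (v x) (v y)) (D / (6 * sqrt d)) \<inter>
      cube d (midpt (v a) (v b)) (D / (6 * sqrt d)) = {}"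
    unfolding D_def by (rule midpt_cubes_disjoint)
  moreover have "edge_cube {a, b} \<subseteq> cube d (midpt (v a) (v b)) (D / (6 * sqrt d))"
    unfolding edge_cube_def edge_midpoint_pair[OF \<open>a \<noteq> b\<close>]
    using le by (intro cube_mono divide_right_mono) (simp_all add: D_def edge_len_pair)
  ultimately show ?thesis
    unfolding edge_cube_def edge_midpoint_pair[OF \<open>x \<noteq> y\<close>] by (auto simp: D_def edge_len_pair)
qed

lemma edge_cubes_disjoint:
  assumes "e \<in> T" "f \<in> T" "e \<noteq> f" "0 < edge_len d v e" "edge_len d v f \<le> edge_len d v e"
  shows "edge_cube e \<inter> edge_cube f = {}"
proof -
  obtain x y where e: "e = {x, y}" "x < n"
    using assms(1) edges_complete by (meson complete_edgesE subsetD)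
  obtain a b where f: "f = {a, b}" "a < n"
    using assms(2) edges_complete by (meson complete_edgesE subsetD)
  have "(x, a) \<in> (edge_rel T)\<^sup>*"
    using connected e f by (simp add: graph_connected_iff)
  then have "(x, a) \<in> (edge_rel (T - {{x, y}}))\<^sup>* \<or> (y, a) \<in> (edge_rel (T - {{x, y}}))\<^sup>*"
    by (rule rtrancl_edge_rel_Diff_edge_sides)
  then show ?thesis
  proof
    assume "(x, a) \<in> (edge_rel (T - {{x, y}}))\<^sup>*"
    then show ?thesis
      using edge_cubes_disjoint_same_side[of x y a b] assms e f by simp
  next
    assume "(y, a) \<in> (edge_rel (T - {{x, y}}))\<^sup>*"
    then show ?thesis
      using edge_cubes_disjoint_same_side[of y x a b] assms e f by (simp add: insert_commute)
  qed
qed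

lemma edge_cube_subset:
  assumes "0 < d" and in_cube: "\<forall>i<n. in_unit_cube d (v i)" and "e \<in> T"
  shows "edge_cube e \<subseteq> cube d (\<lambda>_. 1 / 2) 1"
proof -
  have "e \<in> complete_edges n"
    using \<open>e \<in> T\<close> edges_complete by blast
  then obtain x y where "e = {x, y}" "x < n" "y < n" "x \<noteq> y"
    by (rule complete_edgesE)
  then have mid: "in_unit_cube d (edge_midpoint v e)"
    using in_cube by (simp add: edge_midpoint_pair in_unit_cube_midpt)
  have radius: "edge_len d v e / (6 * sqrt d) \<le> 1 / 6"
    using edge_len_le_sqrt_dim[OF in_cube \<open>e \<in> complete_edges n\<close>] \<open>0 < d\<close> by (simp add: field_simps)
  show ?thesis
    unfolding edge_cube_def
  proof (rule cube_subset_cube)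
    fix k assume "k < d"
    then have "0 \<le> edge_midpoint v e k" "edge_midpoint v e k \<le> 1"
      using mid by (auto simp: in_unit_cube_def)
    then have "\<bar>edge_midpoint v e k - 1 / 2\<bar> \<le> 1 / 2"
      unfolding abs_le_iff by simp
    with radius show "\<bar>edge_midpoint v e k - 1 / 2\<bar> + edge_len d v e / (6 * sqrt d) \<le> 1"
      by linarith
  qed
qed

lemma disjoint_family_on_edge_cube: "disjoint_family_on edge_cube {e \<in> T. 0 < edge_len d v e}"
  unfolding disjoint_family_on_def
proof (intro ballI impI)
  fix e f assume "e \<in> {e \<in> T. 0 < edge_len d v e}" "f \<in> {e \<in> T. 0 < edge_len d v e}" "e \<noteq> f"
  then show "edge_cube e \<inter> edge_cube f = {}"
    using edge_cubes_disjoint[of e f] edge_cubes_disjoint[of f e]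
    by (cases "edge_len d v f \<le> edge_len d v e") (auto simp: Int_commute)
qed

lemma sum_edge_len_power_le:
  assumes "0 < d" and in_cube: "\<forall>i<n. in_unit_cube d (v i)"
  shows "(\<Sum>e\<in>{e \<in> T. 0 < edge_len d v e}. edge_len d v e ^ d) \<le> (6 * sqrt d) ^ d"
proof -
  define P where "P = {e \<in> T. 0 < edge_len d v e}"
  define r where "r e = edge_len d v e / (6 * sqrt d)" for e
  have "0 < sqrt d"
    using assms by simp
  have cube_eq: "edge_cube = (\<lambda>e. cube d (edge_midpoint v e) (r e))"
    by (simp add: fun_eq_iff edge_cube_def r_def)
  have "(\<Sum>e\<in>P. (2 * r e) ^ d) \<le> (2 * 1) ^ d"
    using finite_edges disjoint_family_on_edge_cube edge_cube_subset[OF assms] \<open>0 < sqrt d\<close>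
    unfolding cube_eq
    by (intro sum_cube_volumes_le[where b = "\<lambda>_. 1 / 2"]) (auto simp: P_def r_def)
  moreover have "(2 * r e) ^ d = edge_len d v e ^ d / (3 * sqrt d) ^ d" for e
    by (simp add: r_def power_divide)
  ultimately have "(\<Sum>e\<in>P. edge_len d v e ^ d) / (3 * sqrt d) ^ d \<le> 2 ^ d"
    by (simp add: sum_divide_distrib)
  moreover have "0 < (3 * sqrt d) ^ d"
    using \<open>0 < sqrt d\<close> by simp
  ultimately have "(\<Sum>e\<in>P. edge_len d v e ^ d) \<le> 2 ^ d * (3 * sqrt d) ^ d"
    by (simp only: pos_divide_le_eq)
  also have "\<dots> = (2 * (3 * sqrt d)) ^ d"
    by (rule power_mult_distrib[symmetric])
  finally show ?thesis
    by (simp add: P_def)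
qed

end

section \<open>Sums of powers\<close>

lemma sum_powr_le_card_powr_sum:
  fixes a :: "'i \<Rightarrow> real"
  assumes "finite I" and a: "\<And>i. i \<in> I \<Longrightarrow> 0 \<le> a i" and q: "0 \<le> q" "q \<le> 1"
  shows "(\<Sum>i\<in>I. a i powr q) \<le> real (card I) powr (1 - q) * (\<Sum>i\<in>I. a i) powr q"
proof (cases "(\<Sum>i\<in>I. a i) = 0")
  case True
  then have "\<forall>i\<in>I. a i = 0"
    using sum_nonneg_eq_0_iff[OF \<open>finite I\<close>] a by blast
  then show ?thesis by simp
next
  case False
  define S where "S = (\<Sum>i\<in>I. a i)"
  define m where "m = real (card I)"
  define t where "t = S / m"
  have "0 < S"
    using False a unfolding S_def by (simp add: sum_nonneg order_le_neq_trans)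
  moreover have "0 < m"
    using False \<open>finite I\<close> by (auto simp: m_def card_gt_0_iff)
  ultimately have "0 < t"
    by (simp add: t_def)
  have young: "a i powr q * t powr (1 - q) \<le> q * a i + (1 - q) * t" if "i \<in> I" for i
  proof (cases "a i = 0")
    case True
    then show ?thesis
      using q \<open>0 < t\<close> by simp
  next
    case False
    then show ?thesis
      using Youngs_inequality_0[of q "1 - q" "a i" t] a[OF that] q \<open>0 < t\<close> by simp
  qed
  have "(\<Sum>i\<in>I. a i powr q) * t powr (1 - q) \<le> (\<Sum>i\<in>I. q * a i + (1 - q) * t)"
    unfolding sum_distrib_right by (rule sum_mono) (rule young)
  also have "\<dots> = q * S + (1 - q) * t * m"
    by (simp add: sum.distrib sum_distrib_left S_def m_def)
  also have "\<dots> = S"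
    using \<open>0 < m\<close> by (simp add: t_def field_simps)
  finally have "(\<Sum>i\<in>I. a i powr q) \<le> S / t powr (1 - q)"
    using \<open>0 < t\<close> by (simp add: pos_le_divide_eq)
  also have "\<dots> = (S powr q * S powr (1 - q)) / (S powr (1 - q) / m powr (1 - q))"
    using \<open>0 < S\<close> by (simp add: t_def powr_divide flip: powr_add)
  also have "\<dots> = m powr (1 - q) * S powr q"
    using \<open>0 < S\<close> \<open>0 < m\<close> by (simp add: field_simps)
  finally show ?thesis
    by (simp add: S_def m_def)
qed

lemma sum_powr_le_of_sum_powr_le:
  fixes l :: "'i \<Rightarrow> real"
  assumes "finite I" and l: "\<And>i. i \<in> I \<Longrightarrow> 0 < l i \<and> l i \<le> K"
    and card: "real (card I) \<le> m" and "0 < m" and "0 < p" and "0 < \<alpha>"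
    and sum: "(\<Sum>i\<in>I. l i powr p) \<le> K powr p"
  shows "(\<Sum>i\<in>I. l i powr \<alpha>) \<le> K powr \<alpha> * m powr (max 0 (1 - \<alpha> / p))"
proof (cases "p \<le> \<alpha>")
  case True
  have "(\<Sum>i\<in>I. l i powr \<alpha>) \<le> (\<Sum>i\<in>I. l i powr p * K powr (\<alpha> - p))"
  proof (rule sum_mono)
    fix i assume "i \<in> I"
    have "l i powr \<alpha> = l i powr p * l i powr (\<alpha> - p)"
      by (simp flip: powr_add)
    also have "\<dots> \<le> l i powr p * K powr (\<alpha> - p)"
      using l[OF \<open>i \<in> I\<close>] True by (intro mult_left_mono powr_mono2) auto
    finally show "l i powr \<alpha> \<le> l i powr p * K powr (\<alpha> - p)" .
  qed
  also have "\<dots> \<le> K powr p * K powr (\<alpha> - p)"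
    using sum by (simp add: mult_right_mono flip: sum_distrib_right)
  also have "\<dots> = K powr \<alpha> * m powr (max 0 (1 - \<alpha> / p))"
  proof -
    have "max 0 (1 - \<alpha> / p) = 0"
      using True \<open>0 < p\<close> by (simp add: field_simps)
    then show ?thesis
      using \<open>0 < m\<close> by (simp flip: powr_add)
  qed
  finally show ?thesis .
next
  case False
  define q where "q = \<alpha> / p"
  have q: "0 \<le> q" "q \<le> 1" "max 0 (1 - \<alpha> / p) = 1 - q"
    using False \<open>0 < p\<close> \<open>0 < \<alpha>\<close> by (auto simp: q_def field_simps)
  have powr_q: "x powr \<alpha> = (x powr p) powr q" for x :: real
    using \<open>0 < p\<close> by (simp add: powr_powr q_def)
  have "(\<Sum>i\<in>I. l i powr \<alpha>) = (\<Sum>i\<in>I. (l i powr p) powr q)"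
    by (simp add: powr_q)
  also have "\<dots> \<le> real (card I) powr (1 - q) * (\<Sum>i\<in>I. l i powr p) powr q"
    using \<open>finite I\<close> q by (intro sum_powr_le_card_powr_sum) auto
  also have "\<dots> \<le> m powr (1 - q) * (K powr p) powr q"
    using card sum q by (intro mult_mono powr_mono2) (auto simp: sum_nonneg)
  also have "\<dots> = K powr \<alpha> * m powr (max 0 (1 - \<alpha> / p))"
    by (simp add: powr_q q mult.commute)
  finally show ?thesis .
qed

theorem mainTheorem2:
  shows "\<exists>C::real. C > 0 \<and>
    (\<forall>(d::nat) (\<alpha>::real) (n::nat) (v::nat \<Rightarrow> nat \<Rightarrow> real) T.
       1 \<le> d \<longrightarrow> 0 < \<alpha> \<longrightarrow> 1 \<le> n \<longrightarrow>
       (\<forall>i<n. in_unit_cube d (v i)) \<longrightarrow> is_MST d v n T \<longrightarrow>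
       (\<Sum>e\<in>T. (edge_len d v e) powr \<alpha>)
         \<le> (C * sqrt (real d)) powr \<alpha> * (real n) powr (max 0 (1 - \<alpha> / real d)))"
proof (intro exI[of _ 6] conjI allI impI)
  fix d :: nat and \<alpha> :: real and n :: nat and v :: "nat \<Rightarrow> nat \<Rightarrow> real" and T
  assume "1 \<le> d" "0 < \<alpha>" "1 \<le> n" and in_cube: "\<forall>i<n. in_unit_cube d (v i)"
    and "is_MST d v n T"
  then interpret euclidean_MST d v n T
    by unfold_locales
  define P where "P = {e \<in> T. 0 < edge_len d v e}"
  have "edge_len d v e = 0" if "e \<in> T - P" for e
    using that edges_complete edge_len_nonneg[of e n d v] by (auto simp: P_def)
  then have "(\<Sum>e\<in>T. edge_len d v e powr \<alpha>) = (\<Sum>e\<in>P. edge_len d v e powr \<alpha>)"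
    using finite_edges by (intro sum.mono_neutral_right) (auto simp: P_def)
  also have "\<dots> \<le> (6 * sqrt d) powr \<alpha> * real n powr (max 0 (1 - \<alpha> / real d))"
  proof (rule sum_powr_le_of_sum_powr_le)
    show "0 < edge_len d v e \<and> edge_len d v e \<le> 6 * sqrt d" if "e \<in> P" for e
      using that edge_len_le_sqrt_dim[OF in_cube] edges_complete by (fastforce simp: P_def)
    show "real (card P) \<le> real n"
      using card_positive_edges_le \<open>1 \<le> n\<close> by (simp add: P_def)
    show "(\<Sum>e\<in>P. edge_len d v e powr real d) \<le> (6 * sqrt d) powr real d"
      using sum_edge_len_power_le[OF _ in_cube] \<open>1 \<le> d\<close> by (simp add: P_def powr_realpow)
  qed (use finite_edges \<open>1 \<le> d\<close> \<open>0 < \<alpha>\<close> \<open>1 \<le> n\<close> in \<open>auto simp: P_def\<close>)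
  finally show "(\<Sum>e\<in>T. edge_len d v e powr \<alpha>)
    \<le> (6 * sqrt (real d)) powr \<alpha> * real n powr (max 0 (1 - \<alpha> / real d))" .
qed simp

end
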